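(* Let $X,Y$ be normed spaces over $K$ and $F:X\to Y$ a map. If $F\in B(X,Y)$, then $F$ is topology bounded. Conversely, if $F$ is topology bounded and there is a positive constant $M$ such that $\|F(kx)\|_Y\le M|k|\,\|F(x)\|_Y$ for every scalar $k\neq 0$ and every $x\neq 0$ in $X$, then $F\in B(X,Y)$.
   Context: $K$ is $\mathbb{R}$ or $\mathbb{C}$; normed spaces are nontrivial. Maps need not be linear or continuous. $\|F\|_{B(X,Y)}=\max\left(\sup_{x\neq 0,x\in X}\frac{\|F(x)\|_Y}{\|x\|_X},\ \|F(0)\|_Y\right)\in[0,\infty]$ and $B(X,Y)$ is the set of maps $F:X\to Y$ with $\|F\|_{B(X,Y)}<\infty$. A map $F:X\to Y$ is topology bounded if it maps bounded subsets of $X$ to bounded subsets of $Y$. *)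

theory Defs
  imports "HOL-Analysis.Analysis"
begin

class complex_normed_vector = real_normed_vector +
  fixes scaleC :: "complex \<Rightarrow> 'a \<Rightarrow> 'a" (infixr \<open>*\<^sub>C\<close> 75)
  assumes scaleR_scaleC: "scaleR r x = scaleC (complex_of_real r) x"
    and scaleC_add_right: "scaleC a (x + y) = scaleC a x + scaleC a y"
    and scaleC_add_left: "scaleC (a + b) x = scaleC a x + scaleC b x"
    and scaleC_scaleC: "scaleC a (scaleC b x) = scaleC (a * b) x"
    and scaleC_one: "scaleC 1 x = x"
    and norm_scaleC: "norm (scaleC a x) = cmod a * norm x"

definition Bnorm :: "('a::real_normed_vector \<Rightarrow> 'b::real_normed_vector) \<Rightarrow> ereal" where
  "Bnorm F = max (SUP x\<in>{x. x \<noteq> 0}. ereal (norm (F x) / norm x)) (ereal (norm (F 0)))"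

definition in_B :: "('a::real_normed_vector \<Rightarrow> 'b::real_normed_vector) \<Rightarrow> bool" where
  "in_B F \<longleftrightarrow> Bnorm F < \<infinity>"

definition topology_bounded :: "('a::real_normed_vector \<Rightarrow> 'b::real_normed_vector) \<Rightarrow> bool" where
  "topology_bounded F \<longleftrightarrow> (\<forall>S. bounded S \<longrightarrow> bounded (F ` S))"

end

theory Submission
  imports Defs
begin

text \<open>A map in B(X,Y) grows at most affinely, so it maps balls into balls. Conversely, a
  topology bounded map is bounded by some R on the closed unit ball, and the scaling
  hypothesis applied to x = \<parallel>x\<parallel> \<cdot> sgn x yields \<parallel>F x\<parallel> \<le> M R \<parallel>x\<parallel> for x \<noteq> 0.
  Neither direction needs the spaces to be nontrivial, nor M to be positive.\<close>

lemma less_PInf_iff_le_ereal: "(a::ereal) < \<infinity> \<longleftrightarrow> (\<exists>C. a \<le> ereal C)"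
  by (cases a) auto

lemma scaleR_norm_sgn: "norm x *\<^sub>R sgn x = x"
  by (cases "x = 0") (simp_all add: sgn_div_norm)

lemma Bnorm_le_ereal_iff:
  "Bnorm F \<le> ereal C \<longleftrightarrow> (\<forall>x. x \<noteq> 0 \<longrightarrow> norm (F x) \<le> C * norm x) \<and> norm (F 0) \<le> C"
  by (simp add: Bnorm_def SUP_le_iff pos_divide_le_eq)

lemma in_B_iff:
  "in_B F \<longleftrightarrow> (\<exists>C. (\<forall>x. x \<noteq> 0 \<longrightarrow> norm (F x) \<le> C * norm x) \<and> norm (F 0) \<le> C)"
  unfolding in_B_def less_PInf_iff_le_ereal Bnorm_le_ereal_iff by (rule refl)

lemma in_B_imp_topology_bounded:
  assumes "in_B F"
  shows "topology_bounded F"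
  unfolding topology_bounded_def
proof (intro allI impI)
  obtain C where C: "\<And>x. x \<noteq> 0 \<Longrightarrow> norm (F x) \<le> C * norm x" and C0: "norm (F 0) \<le> C"
    using assms by (auto simp: in_B_iff)
  have "C \<ge> 0"
    using C0 norm_ge_zero order_trans by blast
  have affine: "norm (F x) \<le> C * norm x + C" for x
    using C[of x] C0 \<open>C \<ge> 0\<close> by (cases "x = 0") auto
  fix S :: "'a set"
  assume "bounded S"
  then obtain r where r: "\<And>x. x \<in> S \<Longrightarrow> norm x \<le> r"
    by (auto simp: bounded_iff)
  have "norm (F x) \<le> C * r + C" if "x \<in> S" for x
  proof -
    have "C * norm x \<le> C * r"
      using r[OF that] \<open>C \<ge> 0\<close> by (rule mult_left_mono)
    with affine[of x] show ?thesis by simp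
  qed
  then show "bounded (F ` S)"
    by (auto simp: bounded_iff)
qed

lemma topology_bounded_imp_bounded_on_unit_ball:
  assumes "topology_bounded F"
  obtains R where "R \<ge> 0" and "\<And>x. norm x \<le> 1 \<Longrightarrow> norm (F x) \<le> R"
proof -
  have "bounded (F ` cball 0 1)"
    using assms by (simp add: topology_bounded_def)
  then obtain R where "\<forall>y \<in> F ` cball 0 1. norm y \<le> R"
    by (auto simp: bounded_iff)
  then have R: "\<And>x. norm x \<le> 1 \<Longrightarrow> norm (F x) \<le> R"
    by simp
  moreover have "R \<ge> 0"
    using R[of 0] norm_ge_zero[of "F 0"] by (simp del: norm_ge_zero)
  ultimately show ?thesis
    using that by blast
qed

lemma in_B_if_radial_bound:
  assumes "topology_bounded F"
    and radial: "\<And>x. x \<noteq> 0 \<Longrightarrow> norm (F x) \<le> M * norm x * norm (F (sgn x))"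
  shows "in_B F"
proof -
  obtain R where R0: "R \<ge> 0" and R: "\<And>x. norm x \<le> 1 \<Longrightarrow> norm (F x) \<le> R"
    using topology_bounded_imp_bounded_on_unit_ball[OF assms(1)] by blast
  have "norm (F x) \<le> (\<bar>M\<bar> * R + R) * norm x" if "x \<noteq> 0" for x
  proof -
    have "norm (F x) \<le> M * norm x * norm (F (sgn x))"
      using radial[OF that] .
    also have "\<dots> \<le> \<bar>M\<bar> * norm x * R"
      using R[of "sgn x"] by (intro mult_mono) (auto simp: norm_sgn abs_mult)
    also have "\<dots> \<le> (\<bar>M\<bar> * R + R) * norm x"
      using R0 by (simp add: algebra_simps)
    finally show ?thesis .
  qed
  moreover have "norm (F 0) \<le> \<bar>M\<bar> * R + R"
    using R[of 0] R0 by (simp add: add_increasing)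
  ultimately show ?thesis
    unfolding in_B_iff by blast
qed

lemma in_B_if_real_scaling_bound:
  fixes F :: "'a::real_normed_vector \<Rightarrow> 'b::real_normed_vector"
  assumes "topology_bounded F"
    and "\<forall>k::real. \<forall>x. k \<noteq> 0 \<and> x \<noteq> 0 \<longrightarrow> norm (F (k *\<^sub>R x)) \<le> M * \<bar>k\<bar> * norm (F x)"
  shows "in_B F"
proof (rule in_B_if_radial_bound[OF assms(1)])
  fix x :: 'a
  assume "x \<noteq> 0"
  then show "norm (F x) \<le> M * norm x * norm (F (sgn x))"
    using assms(2)[rule_format, of "norm x" "sgn x"] by (simp add: scaleR_norm_sgn sgn_zero_iff)
qed

lemma in_B_if_complex_scaling_bound:
  fixes F :: "'a::complex_normed_vector \<Rightarrow> 'b::real_normed_vector"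
  assumes "topology_bounded F"
    and "\<forall>k::complex. \<forall>x. k \<noteq> 0 \<and> x \<noteq> 0 \<longrightarrow> norm (F (k *\<^sub>C x)) \<le> M * cmod k * norm (F x)"
  shows "in_B F"
proof (rule in_B_if_radial_bound[OF assms(1)])
  fix x :: 'a
  assume "x \<noteq> 0"
  moreover have "complex_of_real (norm x) *\<^sub>C sgn x = x"
    by (simp add: scaleR_norm_sgn flip: scaleR_scaleC)
  ultimately show "norm (F x) \<le> M * norm x * norm (F (sgn x))"
    using assms(2)[rule_format, of "complex_of_real (norm x)" "sgn x"] by (simp add: sgn_zero_iff)
qed

theorem theorem1:
  fixes F :: "'a::real_normed_vector \<Rightarrow> 'b::real_normed_vector"
    and G :: "'c::complex_normed_vector \<Rightarrow> 'd::complex_normed_vector"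
  assumes "\<exists>x::'a. x \<noteq> 0" and "\<exists>y::'b. y \<noteq> 0"
    and "\<exists>x::'c. x \<noteq> 0" and "\<exists>y::'d. y \<noteq> 0"
  shows "(in_B F \<longrightarrow> topology_bounded F)
       \<and> ((topology_bounded F \<and> (\<exists>M>0. \<forall>k::real. \<forall>x. k \<noteq> 0 \<and> x \<noteq> 0 \<longrightarrow>
              norm (F (k *\<^sub>R x)) \<le> M * \<bar>k\<bar> * norm (F x))) \<longrightarrow> in_B F)
       \<and> (in_B G \<longrightarrow> topology_bounded G)
       \<and> ((topology_bounded G \<and> (\<exists>M>0. \<forall>k::complex. \<forall>x. k \<noteq> 0 \<and> x \<noteq> 0 \<longrightarrow>
              norm (G (k *\<^sub>C x)) \<le> M * cmod k * norm (G x))) \<longrightarrow> in_B G)"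
  using in_B_imp_topology_bounded in_B_if_real_scaling_bound in_B_if_complex_scaling_bound
  by metis

end
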